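(* Let $a,w$ satisfy Assumption (A), $n\ge1$, $k>0$, $q\in[0,1)$, $l\ge0$, $S_H>0$, $\beta_{H\leftarrow M},\beta_{M\leftarrow H},\rho,\gamma,\mu>0$, and assume $\hat R_e\,h(p(0),q)>1$. Let $$\eta:=\frac{\hat R_e-(1+l)}{\hat R_e-1}\cdot\frac{1}{1-q},\qquad r(x):=a(x)-\eta\big(a(x)+w(x)\big).$$ Then system (O) has an equilibrium with $I_H^*>0$ if and only if there exists $x\in(0,+\infty)$ with $r(x)=0$ and $$1+l<\hat R_e<1+\frac{l}{q}$$ (the upper bound being void when $q=0$). If such an equilibrium exists, it is unique and given by $$I_H^*=p^{-1}(\eta),\qquad I_M^*=\frac{\beta_{M\leftarrow H}}{\mu}h(p(I_H^* ),q)I_H^*,\qquad Z_i^*=J^*=I_H^*\ (i=1,\dots,n).$$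
   Context: Assumption (A): $a,w:[0,\infty)\to(0,\infty)$ are continuously differentiable with $a'(x)>0$ and $w'(x)\le0$ for all $x\ge0$. Let $c(p,q):=1-p(1-q)$, $p(x):=a(x)/(a(x)+w(x))$ (strictly increasing, so $p^{-1}$ exists on its range), $h(p,q):=c(p,q)/(c(p,q)+l)$, and $\hat R_e:=\sqrt{\frac{\beta_{H\leftarrow M}\beta_{M\leftarrow H}}{\gamma\mu}\rho S_H}$. System (O) is the ODE system, with $S_H>0$ a fixed parameter, $$\dot I_H=\beta_{H\leftarrow M}\rho I_M h(p(J),q)S_H-\gamma I_H,\qquad \dot I_M=\beta_{M\leftarrow H}h(p(J),q)I_H-\mu I_M,$$ $$\dot Z_1=kI_H-kZ_1,\qquad \dot Z_i=kZ_{i-1}-kZ_i\ (i=2,\dots,n),\qquad J:=Z_n$$ (for $n=1$: $\dot J=kI_H-kJ$), on the nonnegative orthant. *)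

theory Defs
  imports "HOL-Analysis.Analysis"
begin

definition assumptionA :: "(real \<Rightarrow> real) \<Rightarrow> (real \<Rightarrow> real) \<Rightarrow> bool" where
  "assumptionA a w \<longleftrightarrow>
     (\<forall>x\<ge>0. a x > 0 \<and> w x > 0) \<and>
     (\<exists>a' w'. (\<forall>x\<ge>0. (a has_real_derivative a' x) (at x within {0..}) \<and>
                       (w has_real_derivative w' x) (at x within {0..}) \<and>
                       a' x > 0 \<and> w' x \<le> 0) \<and>
              continuous_on {0..} a' \<and> continuous_on {0..} w')"

definition cfun :: "real \<Rightarrow> real \<Rightarrow> real" where
  "cfun p q = 1 - p * (1 - q)"

definition pfun :: "(real \<Rightarrow> real) \<Rightarrow> (real \<Rightarrow> real) \<Rightarrow> real \<Rightarrow> real" where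
  "pfun a w x = a x / (a x + w x)"

definition hfun :: "real \<Rightarrow> real \<Rightarrow> real \<Rightarrow> real" where
  "hfun l p q = cfun p q / (cfun p q + l)"

definition Re_hat :: "real \<Rightarrow> real \<Rightarrow> real \<Rightarrow> real \<Rightarrow> real \<Rightarrow> real \<Rightarrow> real" where
  "Re_hat bHM bMH gamma mu rho SH = sqrt (bHM * bMH / (gamma * mu) * rho * SH)"

text \<open>Equilibrium of system (O) on the nonnegative orthant.  The state is
  (I_H, I_M, Z_1, ..., Z_n), with Z given as a function on indices 1..n; J = Z n.\<close>
definition is_equilibrium_O ::
  "(real \<Rightarrow> real) \<Rightarrow> (real \<Rightarrow> real) \<Rightarrow> nat \<Rightarrow> real \<Rightarrow> real \<Rightarrow> real \<Rightarrow> real \<Rightarrow>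
   real \<Rightarrow> real \<Rightarrow> real \<Rightarrow> real \<Rightarrow> real \<Rightarrow> real \<Rightarrow> real \<Rightarrow> (nat \<Rightarrow> real) \<Rightarrow> bool" where
  "is_equilibrium_O a w n k q l SH bHM bMH rho gamma mu IH IM Z \<longleftrightarrow>
     IH \<ge> 0 \<and> IM \<ge> 0 \<and> (\<forall>i\<in>{1..n}. Z i \<ge> 0) \<and>
     bHM * rho * IM * hfun l (pfun a w (Z n)) q * SH - gamma * IH = 0 \<and>
     bMH * hfun l (pfun a w (Z n)) q * IH - mu * IM = 0 \<and>
     k * IH - k * Z 1 = 0 \<and>
     (\<forall>i\<in>{2..n}. k * Z (i - 1) - k * Z i = 0)"

end

theory Submission
  imports Defs
begin

text \<open>
  Since a is increasing and w is nonincreasing, p = a/(a + w) is strictly increasing on [0,oo).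
  At a positive equilibrium the delay chain forces Z_i = J = I_H; eliminating I_M turns the
  I_H-equation into (R h)^2 = 1 with h = h(p(I_H), q), i.e. h = 1/R. Solving
  c/(c + l) = 1/R for p gives p(I_H) = eta, which is exactly r(I_H) = 0; conversely every
  positive root of r yields such an equilibrium, and p(I_H) \<in> (0,1) translates into the
  bounds on R. Uniqueness follows from the injectivity of p.
\<close>

lemma DERIV_at_if_DERIV_within_atLeast:
  fixes f :: "real \<Rightarrow> real"
  assumes "(f has_real_derivative D) (at x within {c..})" and "c < x"
  shows "(f has_real_derivative D) (at x)"
proof -
  have "at x within {c..} = at x"
    using \<open>c < x\<close> by (intro at_within_interior) simp
  with assms(1) show ?thesis by simp
qed

lemma continuous_on_if_DERIV_within_atLeast:
  fixes f :: "real \<Rightarrow> real"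
  assumes "\<And>x. c \<le> x \<Longrightarrow> (f has_real_derivative f' x) (at x within {c..})"
  shows "continuous_on {c..} f"
  unfolding continuous_on_eq_continuous_within using assms by (auto intro: DERIV_continuous)

lemma strict_mono_on_if_DERIV_within_pos:
  fixes f :: "real \<Rightarrow> real"
  assumes deriv: "\<And>x. c \<le> x \<Longrightarrow> (f has_real_derivative f' x) (at x within {c..}) \<and> 0 < f' x"
  shows "strict_mono_on {c..} f"
proof (rule strict_mono_onI)
  fix x y assume x: "x \<in> {c..}" and "y \<in> {c..}" and "x < y"
  have "continuous_on {c..} f"
    using deriv by (intro continuous_on_if_DERIV_within_atLeast[where f' = f']) simp
  then have cont: "continuous_on {x..y} f"
    by (rule continuous_on_subset) (use x in auto)
  have pos: "\<exists>D. (f has_real_derivative D) (at z) \<and> 0 < D" if "x < z" "z < y" for z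
  proof -
    from x that have "c < z" by simp
    with deriv[of z] have d: "(f has_real_derivative f' z) (at z within {c..})" and "0 < f' z"
      by auto
    then show ?thesis using DERIV_at_if_DERIV_within_atLeast[OF d \<open>c < z\<close>] by blast
  qed
  show "f x < f y"
    by (rule DERIV_pos_imp_increasing_open[OF \<open>x < y\<close> pos cont])
qed

lemma antimono_on_if_DERIV_within_nonpos:
  fixes f :: "real \<Rightarrow> real"
  assumes deriv: "\<And>x. c \<le> x \<Longrightarrow> (f has_real_derivative f' x) (at x within {c..}) \<and> f' x \<le> 0"
  shows "antimono_on {c..} f"
proof (rule monotone_onI)
  fix x y assume x: "x \<in> {c..}" and "y \<in> {c..}" and "x \<le> y"
  have "continuous_on {c..} f"
    using deriv by (intro continuous_on_if_DERIV_within_atLeast[where f' = f']) simp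
  then have cont: "continuous_on {x..y} f"
    by (rule continuous_on_subset) (use x in auto)
  have nonpos: "\<exists>D. (f has_real_derivative D) (at z) \<and> D \<le> 0" if "x < z" "z < y" for z
  proof -
    from x that have "c < z" by simp
    with deriv[of z] have d: "(f has_real_derivative f' z) (at z within {c..})" and "f' z \<le> 0"
      by auto
    then show ?thesis using DERIV_at_if_DERIV_within_atLeast[OF d \<open>c < z\<close>] by blast
  qed
  show "f y \<le> f x"
    by (rule DERIV_nonpos_imp_decreasing_open[OF \<open>x \<le> y\<close> nonpos cont])
qed

lemma assumptionA_pos:
  assumes "assumptionA a w" and "x \<ge> 0"
  shows "a x > 0" and "w x > 0"
  using assms unfolding assumptionA_def by blast+

lemma assumptionA_monotone:
  assumes "assumptionA a w"
  shows "strict_mono_on {0..} a" and "antimono_on {0..} w"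
proof -
  from assms obtain a' w' where deriv: "\<And>x. 0 \<le> x \<Longrightarrow>
      (a has_real_derivative a' x) (at x within {0..}) \<and>
      (w has_real_derivative w' x) (at x within {0..}) \<and> 0 < a' x \<and> w' x \<le> 0"
    unfolding assumptionA_def by blast
  show "strict_mono_on {0..} a"
    by (rule strict_mono_on_if_DERIV_within_pos[where f' = a']) (use deriv in blast)
  show "antimono_on {0..} w"
    by (rule antimono_on_if_DERIV_within_nonpos[where f' = w']) (use deriv in blast)
qed

lemma pfun_pos_less_one:
  assumes "a x > 0" and "w x > 0"
  shows "0 < pfun a w x" and "pfun a w x < 1"
  using assms by (auto simp: pfun_def divide_less_eq)

lemma pfun_eq_iff:
  assumes "a x + w x \<noteq> 0"
  shows "pfun a w x = e \<longleftrightarrow> a x - e * (a x + w x) = 0"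
  using assms by (auto simp: pfun_def divide_eq_eq)

lemma strict_mono_on_pfun:
  assumes a: "strict_mono_on S a" and w: "antimono_on S w"
    and pos: "\<And>x. x \<in> S \<Longrightarrow> a x > 0 \<and> w x > 0"
  shows "strict_mono_on S (pfun a w)"
proof (rule strict_mono_onI)
  fix x y assume xy: "x \<in> S" "y \<in> S" "x < y"
  have ax: "0 < a x" "0 < w x" and ay: "0 < a y" "0 < w y"
    using pos xy by auto
  have "a x * w y < a y * w y"
    using strict_mono_onD[OF a xy] ay by simp
  also have "\<dots> \<le> a y * w x"
    using monotone_onD[OF w xy(1,2)] xy(3) ay by simp
  finally have "a x * (a y + w y) - a y * (a x + w x) < 0"
    by (simp add: algebra_simps)
  moreover have "0 < (a x + w x) * (a y + w y)"
    using ax ay by simp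
  ultimately show "pfun a w x < pfun a w y"
    unfolding pfun_def using ax ay by (simp add: frac_less_eq divide_less_0_iff)
qed

lemma assumptionA_inj_on_pfun:
  assumes "assumptionA a w"
  shows "inj_on (pfun a w) {0..}"
proof -
  have "strict_mono_on {0..} (pfun a w)"
    by (rule strict_mono_on_pfun[OF assumptionA_monotone[OF assms]])
      (simp add: assumptionA_pos[OF assms])
  then show ?thesis
    by (rule strict_mono_on_imp_inj_on)
qed

lemma cfun_pos:
  assumes "p < 1" and "0 \<le> q" and "q \<le> 1"
  shows "0 < cfun p q"
proof (cases "p \<ge> 0")
  case True
  then have "p * (1 - q) \<le> p"
    using assms by (simp add: mult_left_le)
  with assms show ?thesis unfolding cfun_def by linarith
next
  case False
  then have "p * (1 - q) \<le> 0"
    using assms by (intro mult_nonpos_nonneg) auto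
  then show ?thesis unfolding cfun_def by linarith
qed

lemma hfun_pos_le_one:
  assumes "p < 1" and "0 \<le> q" and "q \<le> 1" and "0 \<le> l"
  shows "0 < hfun l p q" and "hfun l p q \<le> 1"
  using cfun_pos[OF assms(1-3)] assms(4) by (auto simp: hfun_def)

text \<open>Solving c(p,q)/(c(p,q) + l) = 1/R for p: this is where the threshold eta comes from.\<close>

lemma hfun_eq_inverse_iff:
  fixes R p q l :: real
  assumes R: "1 < R" and q: "q < 1" and c: "0 < cfun p q" and l: "0 \<le> l"
  shows "hfun l p q = 1 / R \<longleftrightarrow> p = (R - (1 + l)) / (R - 1) * (1 / (1 - q))"
proof -
  have "hfun l p q = 1 / R \<longleftrightarrow> cfun p q * (R - 1) = l"
    unfolding hfun_def using c l R by (auto simp: field_simps)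
  also have "\<dots> \<longleftrightarrow> p * (1 - q) * (R - 1) = R - (1 + l)"
    unfolding cfun_def by (auto simp: algebra_simps)
  also have "\<dots> \<longleftrightarrow> p = (R - (1 + l)) / ((1 - q) * (R - 1))"
    using R q by (simp add: eq_divide_eq mult.assoc)
  also have "\<dots> \<longleftrightarrow> p = (R - (1 + l)) / (R - 1) * (1 / (1 - q))"
    by (simp add: ac_simps)
  finally show ?thesis .
qed

lemma threshold_in_unit_interval_imp_bounds:
  fixes R q l :: real
  defines "eta \<equiv> (R - (1 + l)) / (R - 1) * (1 / (1 - q))"
  assumes R: "1 < R" and q: "0 \<le> q" "q < 1" and eta: "0 < eta" "eta < 1"
  shows "1 + l < R \<and> (q = 0 \<or> R < 1 + l / q)"
proof -
  have eta_eq: "(R - (1 + l)) / (R - 1) = eta * (1 - q)"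
    unfolding eta_def using q by simp
  have "0 < (R - (1 + l)) / (R - 1)"
    unfolding eta_eq using eta q by simp
  then have lower: "1 + l < R"
    using R by (simp add: zero_less_divide_iff)
  have "(R - (1 + l)) / (R - 1) < 1 - q"
    unfolding eta_eq using eta q by simp
  then have "q * (R - 1) < l"
    using R by (simp add: field_simps)
  then have "q = 0 \<or> R < 1 + l / q"
    using q R by (cases "q = 0") (auto simp: field_simps)
  with lower show ?thesis by blast
qed

lemma Re_hat_pos:
  assumes "bHM > 0" "bMH > 0" "rho > 0" "gamma > 0" "mu > 0" "SH > 0"
  shows "Re_hat bHM bMH gamma mu rho SH > 0"
  using assms by (simp add: Re_hat_def)

lemma Re_hat_squared:
  assumes "bHM > 0" "bMH > 0" "rho > 0" "gamma > 0" "mu > 0" "SH > 0"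
  shows "(Re_hat bHM bMH gamma mu rho SH)\<^sup>2 = bHM * bMH / (gamma * mu) * rho * SH"
  using assms by (simp add: Re_hat_def)

text \<open>The I_H-equation of (O) after substituting I_M from the I_M-equation.\<close>

lemma host_balance_iff_Re_hat_mult_eq_one:
  assumes par: "bHM > 0" "bMH > 0" "rho > 0" "gamma > 0" "mu > 0" "SH > 0"
    and "IH > 0" and "h > 0"
  shows "bHM * rho * (bMH / mu * h * IH) * h * SH = gamma * IH
    \<longleftrightarrow> Re_hat bHM bMH gamma mu rho SH * h = 1"
proof -
  let ?R = "Re_hat bHM bMH gamma mu rho SH"
  define K where "K = bHM * bMH / (gamma * mu) * rho * SH"
  have balance: "bHM * rho * (bMH / mu * h * IH) * h * SH = (h * h * K) * (gamma * IH)"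
    using assms unfolding K_def by (simp add: field_simps)
  have "bHM * rho * (bMH / mu * h * IH) * h * SH = gamma * IH
      \<longleftrightarrow> (h * h * K) * (gamma * IH) = 1 * (gamma * IH)"
    by (simp only: balance mult_1_left)
  also have "\<dots> \<longleftrightarrow> h * h * K = 1"
    using assms by (subst mult_cancel_right) simp
  also have "\<dots> \<longleftrightarrow> (?R * h)\<^sup>2 = 1"
    unfolding K_def Re_hat_squared[OF par, symmetric] by (simp add: power2_eq_square mult_ac)
  also have "\<dots> \<longleftrightarrow> ?R * h = 1"
    using mult_pos_pos[OF Re_hat_pos[OF par] \<open>h > 0\<close>] by (auto simp: power2_eq_1_iff)
  finally show ?thesis .
qed

lemma is_equilibrium_O_delay_chain:
  assumes "is_equilibrium_O a w n k q l SH bHM bMH rho gamma mu IH IM Z" and "k \<noteq> 0"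
  shows "\<forall>i\<in>{1..n}. Z i = IH"
proof
  have first: "Z 1 = IH" and link: "\<And>i. i \<in> {2..n} \<Longrightarrow> Z (i - 1) = Z i"
    using assms unfolding is_equilibrium_O_def by auto
  fix i assume "i \<in> {1..n}"
  then have "1 \<le> i" "i \<le> n" by auto
  then show "Z i = IH"
  proof (induction i rule: dec_induct)
    case base
    show ?case using first .
  next
    case (step m)
    then show ?case using link[of "Suc m"] by simp
  qed
qed

lemma positive_equilibrium_O_iff:
  assumes "n \<ge> 1" and "k > 0"
    and par: "bHM > 0" "bMH > 0" "rho > 0" "gamma > 0" "mu > 0" "SH > 0"
    and IH: "IH > 0" and h: "0 < hfun l (pfun a w IH) q"
  shows "is_equilibrium_O a w n k q l SH bHM bMH rho gamma mu IH IM Z \<longleftrightarrow>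
    (\<forall>i\<in>{1..n}. Z i = IH) \<and> IM = bMH / mu * hfun l (pfun a w IH) q * IH \<and>
    Re_hat bHM bMH gamma mu rho SH * hfun l (pfun a w IH) q = 1"
  (is "?eq \<longleftrightarrow> ?Z \<and> ?IM \<and> ?R")
proof
  assume eq: ?eq
  have Z: ?Z
    using is_equilibrium_O_delay_chain[OF eq] \<open>k > 0\<close> by simp
  with \<open>n \<ge> 1\<close> have "Z n = IH" by simp
  with eq have host: "bHM * rho * IM * hfun l (pfun a w IH) q * SH = gamma * IH"
    and vector: "bMH * hfun l (pfun a w IH) q * IH = mu * IM"
    unfolding is_equilibrium_O_def by simp_all
  from vector \<open>mu > 0\<close> have IM: ?IM
    by (simp add: eq_divide_eq mult.commute)
  from host[unfolded IM] have ?R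
    unfolding host_balance_iff_Re_hat_mult_eq_one[OF par IH h] .
  with Z IM show "?Z \<and> ?IM \<and> ?R" by blast
next
  assume "?Z \<and> ?IM \<and> ?R"
  then have Z: ?Z and IM: ?IM and R: ?R by blast+
  have chain: "\<forall>i\<in>{2..n}. k * Z (i - 1) - k * Z i = 0"
  proof
    fix i assume "i \<in> {2..n}"
    then have "i - 1 \<in> {1..n}" and "i \<in> {1..n}" by auto
    with Z show "k * Z (i - 1) - k * Z i = 0" by simp
  qed
  have ends: "Z 1 = IH" "Z n = IH"
    using Z \<open>n \<ge> 1\<close> by auto
  have host: "bHM * rho * IM * hfun l (pfun a w IH) q * SH = gamma * IH"
    unfolding IM host_balance_iff_Re_hat_mult_eq_one[OF par IH h] by (rule R)
  have vector: "bMH * hfun l (pfun a w IH) q * IH = mu * IM"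
    unfolding IM using \<open>mu > 0\<close> by simp
  have "IM \<ge> 0"
    unfolding IM using par IH h by simp
  with Z IH chain ends host vector show ?eq
    unfolding is_equilibrium_O_def by auto
qed

locale system_O =
  fixes a w :: "real \<Rightarrow> real" and n :: nat
    and k q l SH bHM bMH rho gamma mu :: real
  assumes assumptionA: "assumptionA a w"
    and n: "n \<ge> 1" and k: "k > 0" and q: "0 \<le> q" "q < 1" and l: "l \<ge> 0"
    and par: "bHM > 0" "bMH > 0" "rho > 0" "gamma > 0" "mu > 0" "SH > 0"
    and endemic: "Re_hat bHM bMH gamma mu rho SH * hfun l (pfun a w 0) q > 1"
begin

abbreviation "R \<equiv> Re_hat bHM bMH gamma mu rho SH"

abbreviation "eta \<equiv> (R - (1 + l)) / (R - 1) * (1 / (1 - q))"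

abbreviation "equilibrium \<equiv> is_equilibrium_O a w n k q l SH bHM bMH rho gamma mu"

lemma assumptionA_bounds:
  assumes "x \<ge> 0"
  shows "a x > 0" "w x > 0" "0 < pfun a w x" "pfun a w x < 1"
  using assumptionA_pos[OF assumptionA assms] pfun_pos_less_one by auto

lemma hfun_pfun_pos_le_one:
  assumes "x \<ge> 0"
  shows "0 < hfun l (pfun a w x) q" "hfun l (pfun a w x) q \<le> 1"
  using hfun_pos_le_one[OF assumptionA_bounds(4)[OF assms] q(1) _ l] q(2) by auto

lemma R_gt_one: "1 < R"
proof -
  have "R * hfun l (pfun a w 0) q \<le> R"
    using hfun_pfun_pos_le_one[of 0] Re_hat_pos[OF par] by (simp add: mult_left_le)
  with endemic show ?thesis by linarith
qed

lemma positive_equilibrium_iff_threshold: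
  assumes IH: "IH > 0"
  shows "equilibrium IH IM Z \<longleftrightarrow>
    (\<forall>i\<in>{1..n}. Z i = IH) \<and> IM = bMH / mu * hfun l (pfun a w IH) q * IH \<and> pfun a w IH = eta"
proof -
  have c: "0 < cfun (pfun a w IH) q"
    using cfun_pos[OF assumptionA_bounds(4) q(1)] IH q(2) by simp
  have "R * hfun l (pfun a w IH) q = 1 \<longleftrightarrow> hfun l (pfun a w IH) q = 1 / R"
    using R_gt_one by (auto simp: field_simps)
  also have "\<dots> \<longleftrightarrow> pfun a w IH = eta"
    by (rule hfun_eq_inverse_iff[OF R_gt_one q(2) c l])
  finally show ?thesis
    using positive_equilibrium_O_iff[OF n k par IH hfun_pfun_pos_le_one(1)] IH by simp
qed

lemma root_iff_pfun_eq:
  assumes "x \<ge> 0"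
  shows "a x - eta * (a x + w x) = 0 \<longleftrightarrow> pfun a w x = eta"
  using pfun_eq_iff[of a x w eta] assumptionA_bounds[OF assms] by simp

lemma positive_equilibrium_exists_iff:
  "(\<exists>IH IM Z. equilibrium IH IM Z \<and> IH > 0) \<longleftrightarrow>
    (\<exists>x>0. a x - eta * (a x + w x) = 0) \<and> 1 + l < R \<and> (q = 0 \<or> R < 1 + l / q)"
proof
  assume "\<exists>IH IM Z. equilibrium IH IM Z \<and> IH > 0"
  then obtain IH IM Z where "equilibrium IH IM Z" and IH: "IH > 0"
    by blast
  then have p: "pfun a w IH = eta"
    using positive_equilibrium_iff_threshold by blast
  then have "0 < eta" "eta < 1"
    using assumptionA_bounds(3,4)[of IH] IH by auto
  then have "1 + l < R \<and> (q = 0 \<or> R < 1 + l / q)"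
    by (rule threshold_in_unit_interval_imp_bounds[OF R_gt_one q])
  moreover have "a IH - eta * (a IH + w IH) = 0"
    using root_iff_pfun_eq p IH by simp
  ultimately show "(\<exists>x>0. a x - eta * (a x + w x) = 0) \<and> 1 + l < R \<and> (q = 0 \<or> R < 1 + l / q)"
    using IH by blast
next
  assume "(\<exists>x>0. a x - eta * (a x + w x) = 0) \<and> 1 + l < R \<and> (q = 0 \<or> R < 1 + l / q)"
  then obtain x where x: "x > 0" "pfun a w x = eta"
    using root_iff_pfun_eq by auto
  then have "equilibrium x (bMH / mu * hfun l (pfun a w x) q * x) (\<lambda>_. x)"
    using positive_equilibrium_iff_threshold by simp
  with x show "\<exists>IH IM Z. equilibrium IH IM Z \<and> IH > 0"
    by blast
qed

lemma positive_equilibrium_unique: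
  assumes "equilibrium IH IM Z" and "IH > 0"
  shows "IH = the_inv_into {0..} (pfun a w) eta \<and>
    IM = bMH / mu * hfun l (pfun a w IH) q * IH \<and> (\<forall>i\<in>{1..n}. Z i = IH)"
proof -
  have eq: "(\<forall>i\<in>{1..n}. Z i = IH) \<and> IM = bMH / mu * hfun l (pfun a w IH) q * IH \<and> pfun a w IH = eta"
    using assms positive_equilibrium_iff_threshold by blast
  have "the_inv_into {0..} (pfun a w) eta = IH"
    using eq \<open>IH > 0\<close>
    by (intro the_inv_into_f_eq[OF assumptionA_inj_on_pfun[OF assumptionA]]) simp_all
  with eq show ?thesis by simp
qed

end

theorem mainTheorem11:
  fixes a w :: "real \<Rightarrow> real" and n :: nat
    and k q l SH bHM bMH rho gamma mu :: real
  assumes hA: "assumptionA a w"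
    and hn: "n \<ge> 1" and hk: "k > 0" and hq: "0 \<le> q" "q < 1" and hl: "l \<ge> 0"
    and hSH: "SH > 0" and hpar: "bHM > 0" "bMH > 0" "rho > 0" "gamma > 0" "mu > 0"
    and hR: "Re_hat bHM bMH gamma mu rho SH * hfun l (pfun a w 0) q > 1"
  shows "let R = Re_hat bHM bMH gamma mu rho SH;
             eta = (R - (1 + l)) / (R - 1) * (1 / (1 - q));
             r = (\<lambda>x. a x - eta * (a x + w x))
         in ((\<exists>IH IM Z. is_equilibrium_O a w n k q l SH bHM bMH rho gamma mu IH IM Z \<and> IH > 0)
              \<longleftrightarrow> ((\<exists>x>0. r x = 0) \<and> 1 + l < R \<and> (q = 0 \<or> R < 1 + l / q)))
          \<and> (\<forall>IH IM Z. is_equilibrium_O a w n k q l SH bHM bMH rho gamma mu IH IM Z \<and> IH > 0 \<longrightarrow>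
                IH = the_inv_into {0..} (pfun a w) eta \<and>
                IM = bMH / mu * hfun l (pfun a w IH) q * IH \<and>
                (\<forall>i\<in>{1..n}. Z i = IH))"
proof -
  interpret system_O a w n k q l SH bHM bMH rho gamma mu
    using assms by unfold_locales simp_all
  show ?thesis
    unfolding Let_def
    using positive_equilibrium_exists_iff positive_equilibrium_unique by blast
qed

end
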